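(* Let $w=w_1\cdots w_n$ be a word of distinct positive integers avoiding $31245,32145,31254,32154$. Let $l_1<\dots<l_s$ be the positions of the left-to-right maxima of $w$ and $r_1<\dots<r_t$ the positions of the right-to-left maxima (so $l_1=1$, $l_s=r_1$ is the position of $\max(w)$, $r_t=n$). Assume $s>1$, $t>1$, $l_s>s$, and $w_{l_{s-1}}<w_{r_2}$. Then exactly one of the following holds: (I-1) $l_s=l_{s-1}+1$; (I-2) $l_s=l_{s-1}+2$ and $w_j<w_{l_{s-1}}$ for all $l_s<j<r_2$; (I-3) $l_s=l_{s-1}+2$ and there is an integer $k$ with $l_s<k<r_2$ such that $w_j>w_{l_{s-1}}$ for all $l_s<j\le k$ and $w_j<w_{l_{s-1}}$ for all $k<j<r_2$.
   Context: A word of distinct positive integers avoids a pattern $P$ (a permutation of $[m]$) if no subsequence of length $m$ is order-isomorphic to $P$. A left-to-right (resp. right-to-left) maximum of $w$ is a letter $w_i$ greater than all letters to its left (resp. right). *)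

theory Defs
  imports Main
begin

text \<open>Words are lists of natural numbers; letters are accessed with 1-based positions.\<close>

definition letter :: "nat list \<Rightarrow> nat \<Rightarrow> nat" where
  "letter w i = w ! (i - 1)"

definition contains_pattern :: "nat list \<Rightarrow> nat list \<Rightarrow> bool" where
  "contains_pattern w P \<longleftrightarrow>
     (\<exists>idx :: nat \<Rightarrow> nat.
        (\<forall>a b. a < b \<and> b < length P \<longrightarrow> idx a < idx b) \<and>
        (\<forall>a < length P. idx a < length w) \<and>
        (\<forall>a < length P. \<forall>b < length P. (w ! idx a < w ! idx b \<longleftrightarrow> P ! a < P ! b)))"

definition avoids :: "nat list \<Rightarrow> nat list \<Rightarrow> bool" where
  "avoids w P \<longleftrightarrow> \<not> contains_pattern w P"

definition ltr_max_pos :: "nat list \<Rightarrow> nat list" where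
  "ltr_max_pos w = filter (\<lambda>i. \<forall>j. 1 \<le> j \<and> j < i \<longrightarrow> letter w j < letter w i) [1..<length w + 1]"

definition rtl_max_pos :: "nat list \<Rightarrow> nat list" where
  "rtl_max_pos w = filter (\<lambda>i. \<forall>j. i < j \<and> j \<le> length w \<longrightarrow> letter w j < letter w i) [1..<length w + 1]"

end

theory Submission
  imports Defs
begin

text \<open>Let \<open>a = l (s - 1)\<close>, \<open>m = l s = r 1\<close> and \<open>c = r 2\<close>. All letters strictly between
  \<open>a\<close> and \<open>m\<close> are below \<open>w\<^sub>a\<close>, all letters strictly between \<open>m\<close> and \<open>c\<close> are below
  \<open>w\<^sub>c\<close>, and \<open>w\<^sub>a < w\<^sub>c < w\<^sub>m\<close>. Avoiding the four patterns means that \<open>w\<^sub>a\<close> is never followed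
  by two letters below it and then two letters above it. The positions \<open>a + 1, a + 2, m, c\<close>
  therefore force \<open>m \<le> a + 2\<close>; and when \<open>m = a + 2\<close>, the positions \<open>a + 1, j, j', c\<close> show that
  between \<open>m\<close> and \<open>c\<close> no letter below \<open>w\<^sub>a\<close> precedes one above it, so the letters above
  \<open>w\<^sub>a\<close> form an initial segment of that stretch.\<close>

lemma sorted_wrt_less_nth_gap:
  fixes xs :: "'a::linorder list"
  assumes "sorted_wrt (<) xs" "Suc k < length xs" "xs ! k < x" "x < xs ! Suc k"
  shows "x \<notin> set xs"
proof
  assume "x \<in> set xs"
  then obtain q where q: "q < length xs" "xs ! q = x" by (auto simp: in_set_conv_nth)
  have "sorted xs" using assms(1) by (simp add: strict_sorted_iff)
  then show False
    using sorted_nth_mono[of xs q k] sorted_nth_mono[of xs "Suc k" q] assms q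
    by (cases "q \<le> k") auto
qed

lemma sorted_wrt_less_gt_last:
  fixes xs :: "'a::linorder list"
  assumes "sorted_wrt (<) xs" "last xs < x"
  shows "x \<notin> set xs"
proof
  assume "x \<in> set xs"
  then obtain q where q: "q < length xs" "xs ! q = x" by (auto simp: in_set_conv_nth)
  have "sorted xs" using assms(1) by (simp add: strict_sorted_iff)
  moreover have "xs \<noteq> []" "q \<le> length xs - 1" using q by auto
  ultimately show False
    using sorted_nth_mono[of xs q "length xs - 1"] assms q by (auto simp: last_conv_nth)
qed

lemma sorted_wrt_less_nth_0_le:
  fixes xs :: "'a::linorder list"
  assumes "sorted_wrt (<) xs" "x \<in> set xs"
  shows "xs ! 0 \<le> x"
proof -
  obtain q where q: "q < length xs" "xs ! q = x" using assms(2) by (auto simp: in_set_conv_nth)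
  have "sorted xs" using assms(1) by (simp add: strict_sorted_iff)
  then show ?thesis using sorted_nth_mono[of xs 0 q] q by simp
qed

lemma set_ltr_max_pos:
  "i \<in> set (ltr_max_pos w) \<longleftrightarrow>
     1 \<le> i \<and> i \<le> length w \<and> (\<forall>j. 1 \<le> j \<and> j < i \<longrightarrow> letter w j < letter w i)"
  unfolding ltr_max_pos_def by auto

lemma set_rtl_max_pos:
  "i \<in> set (rtl_max_pos w) \<longleftrightarrow>
     1 \<le> i \<and> i \<le> length w \<and> (\<forall>j. i < j \<and> j \<le> length w \<longrightarrow> letter w j < letter w i)"
  unfolding rtl_max_pos_def by auto

lemma sorted_ltr_max_pos: "sorted_wrt (<) (ltr_max_pos w)"
  unfolding ltr_max_pos_def by (rule sorted_wrt_filter[OF sorted_wrt_upt])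

lemma sorted_rtl_max_pos: "sorted_wrt (<) (rtl_max_pos w)"
  unfolding rtl_max_pos_def by (rule sorted_wrt_filter[OF sorted_wrt_upt])

lemma letter_inj:
  "distinct w \<Longrightarrow> 1 \<le> i \<Longrightarrow> i \<le> length w \<Longrightarrow> 1 \<le> j \<Longrightarrow> j \<le> length w \<Longrightarrow>
   letter w i = letter w j \<Longrightarrow> i = j"
  unfolding letter_def by (simp add: nth_eq_iff_index_eq)

lemma letter_less_ltr_max:
  assumes "distinct w" "a \<in> set (ltr_max_pos w)" "a < j" "j \<le> length w"
    and "\<forall>i. a < i \<and> i \<le> j \<longrightarrow> i \<notin> set (ltr_max_pos w)"
  shows "letter w j < letter w a"
  using assms(3-5)
proof (induction j rule: less_induct)
  case (less j)
  have "1 \<le> a" using assms(2) by (simp add: set_ltr_max_pos)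
  with less.prems obtain i where i: "1 \<le> i" "i < j" "\<not> letter w i < letter w j"
    by (auto simp: set_ltr_max_pos)
  with less.prems have "letter w j < letter w i"
    using letter_inj[OF assms(1), of i j] by fastforce
  moreover have "letter w i \<le> letter w a"
  proof (cases "i \<le> a")
    case True
    then show ?thesis using assms(2) i(1) by (cases "i = a") (auto simp: set_ltr_max_pos)
  next
    case False
    then show ?thesis using less.IH[of i] less.prems i by simp
  qed
  ultimately show ?case by simp
qed

lemma letter_less_rtl_max:
  assumes "distinct w" "c \<in> set (rtl_max_pos w)" "1 \<le> j" "j < c"
    and "\<forall>i. j \<le> i \<and> i < c \<longrightarrow> i \<notin> set (rtl_max_pos w)"
  shows "letter w j < letter w c"
  using assms(3-5)
proof (induction "c - j" arbitrary: j rule: less_induct)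
  case less
  have "c \<le> length w" using assms(2) by (simp add: set_rtl_max_pos)
  with less.prems obtain i where i: "j < i" "i \<le> length w" "\<not> letter w i < letter w j"
    by (auto simp: set_rtl_max_pos)
  with less.prems \<open>c \<le> length w\<close> have "letter w j < letter w i"
    using letter_inj[OF assms(1), of i j] by fastforce
  moreover have "letter w i \<le> letter w c"
  proof (cases "c \<le> i")
    case True
    then show ?thesis using assms(2) i(2) by (auto simp: set_rtl_max_pos le_less)
  next
    case False
    then show ?thesis using less.hyps[of i] less.prems i by (simp add: less_imp_le)
  qed
  ultimately show ?case by simp
qed

lemma rtl_max_pos_nth_0:
  assumes "distinct w" "ltr_max_pos w \<noteq> []"
  shows "rtl_max_pos w ! 0 = last (ltr_max_pos w)"
proof -
  define m where "m = last (ltr_max_pos w)"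
  have m: "m \<in> set (ltr_max_pos w)" using assms(2) unfolding m_def by simp
  have "letter w j < letter w m" if "m < j" "j \<le> length w" for j
    using letter_less_ltr_max[OF assms(1) m that] sorted_wrt_less_gt_last[OF sorted_ltr_max_pos]
    unfolding m_def by auto
  with m have mR: "m \<in> set (rtl_max_pos w)" by (simp add: set_ltr_max_pos set_rtl_max_pos)
  then have "rtl_max_pos w ! 0 \<in> set (rtl_max_pos w)" by (cases "rtl_max_pos w") auto
  with m have "\<not> rtl_max_pos w ! 0 < m"
    using less_asym by (fastforce simp: set_ltr_max_pos set_rtl_max_pos)
  with sorted_wrt_less_nth_0_le[OF sorted_rtl_max_pos mR] show ?thesis
    unfolding m_def by simp
qed

lemma ltr_rtl_max_pos_around_max:
  assumes "distinct w" "1 < length (ltr_max_pos w)" "1 < length (rtl_max_pos w)"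
  defines "a \<equiv> ltr_max_pos w ! (length (ltr_max_pos w) - 2)"
    and "m \<equiv> ltr_max_pos w ! (length (ltr_max_pos w) - 1)"
    and "c \<equiv> rtl_max_pos w ! 1"
  shows "1 \<le> a" and "a < m" and "m < c" and "c \<le> length w"
    and "\<forall>j. a < j \<and> j < m \<longrightarrow> letter w j < letter w a"
    and "\<forall>j. m < j \<and> j < c \<longrightarrow> letter w j < letter w c"
    and "letter w c < letter w m"
proof -
  let ?L = "ltr_max_pos w" and ?R = "rtl_max_pos w"
  have Suc_k: "Suc (length ?L - 2) = length ?L - 1" using assms(2) by simp
  have a: "a \<in> set ?L" and m: "m \<in> set ?L" and c: "c \<in> set ?R"
    using assms(2,3) unfolding a_def m_def c_def by simp_all
  then show "1 \<le> a" "c \<le> length w" by (simp_all add: set_ltr_max_pos set_rtl_max_pos)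
  show "a < m"
    using sorted_wrt_nth_less[OF sorted_ltr_max_pos[of w], of "length ?L - 2" "length ?L - 1"] assms(2)
    unfolding a_def m_def by simp
  have "m \<le> length w" using m by (simp add: set_ltr_max_pos)
  have "\<forall>i. a < i \<and> i \<le> j \<longrightarrow> i \<notin> set ?L" if "j < m" for j
    using sorted_wrt_less_nth_gap[OF sorted_ltr_max_pos[of w], of "length ?L - 2"] that assms(2) Suc_k
    unfolding a_def m_def by auto
  with letter_less_ltr_max[OF assms(1) a] \<open>m \<le> length w\<close>
  show "\<forall>j. a < j \<and> j < m \<longrightarrow> letter w j < letter w a" by auto
  have "?L \<noteq> []" using assms(2) by auto
  then have R0: "?R ! 0 = m"
    using rtl_max_pos_nth_0[OF assms(1)] unfolding m_def by (simp add: last_conv_nth)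
  show "m < c"
    using sorted_wrt_nth_less[OF sorted_rtl_max_pos[of w], of 0 1] assms(3) R0 unfolding c_def by simp
  have "m \<in> set ?R" using R0 assms(3) by (metis nth_mem order.strict_trans zero_less_one)
  with \<open>m < c\<close> \<open>c \<le> length w\<close> show "letter w c < letter w m" by (simp add: set_rtl_max_pos)
  have "\<forall>i. j \<le> i \<and> i < c \<longrightarrow> i \<notin> set ?R" if "m < j" for j
    using sorted_wrt_less_nth_gap[OF sorted_rtl_max_pos[of w], of 0] that assms(3) R0
    unfolding c_def by auto
  with letter_less_rtl_max[OF assms(1) c]
  show "\<forall>j. m < j \<and> j < c \<longrightarrow> letter w j < letter w c" by auto
qed

lemma contains_patternI:
  assumes "sorted_wrt (<) ps" "\<forall>p\<in>set ps. p < length w" "length ps = length P"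
    and "\<forall>a<length P. \<forall>b<length P. map (nth w) ps ! a < map (nth w) ps ! b \<longleftrightarrow> P ! a < P ! b"
  shows "contains_pattern w P"
  unfolding contains_pattern_def
  using assms by (intro exI[of _ "(!) ps"]) (auto simp: sorted_wrt_iff_nth_less)

lemma all_less_5: "(\<forall>a<5::nat. X a) \<longleftrightarrow> X 0 \<and> X 1 \<and> X 2 \<and> X 3 \<and> X 4"
  by (auto simp: numeral_eq_Suc less_Suc_eq)

lemma two_below_two_above_order_type:
  fixes x0 x1 x2 x3 x4 :: "'a::linorder"
  assumes "x1 < x0" "x2 < x0" "x0 < x3" "x0 < x4" "x1 \<noteq> x2" "x3 \<noteq> x4"
  obtains P :: "nat list"
  where "P \<in> {[3,1,2,4,5], [3,2,1,4,5], [3,1,2,5,4], [3,2,1,5,4]}"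
    and "\<forall>a<5. \<forall>b<5. [x0,x1,x2,x3,x4] ! a < [x0,x1,x2,x3,x4] ! b \<longleftrightarrow> P ! a < P ! b"
proof -
  consider "x1 < x2" "x3 < x4" | "x2 < x1" "x3 < x4" | "x1 < x2" "x4 < x3" | "x2 < x1" "x4 < x3"
    using assms(5,6) by (meson linorder_neqE)
  then show thesis
  proof cases
    case 1
    with assms show thesis by (intro that[of "[3,1,2,4,5]"]) (auto simp: all_less_5)
  next
    case 2
    with assms show thesis by (intro that[of "[3,2,1,4,5]"]) (auto simp: all_less_5)
  next
    case 3
    with assms show thesis by (intro that[of "[3,1,2,5,4]"]) (auto simp: all_less_5)
  next
    case 4
    with assms show thesis by (intro that[of "[3,2,1,5,4]"]) (auto simp: all_less_5)
  qed
qed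

lemma no_two_below_then_two_above:
  assumes "distinct w"
    and "avoids w [3,1,2,4,5]" "avoids w [3,2,1,4,5]" "avoids w [3,1,2,5,4]" "avoids w [3,2,1,5,4]"
    and pos: "1 \<le> p0" "p0 < p1" "p1 < p2" "p2 < p3" "p3 < p4" "p4 \<le> length w"
    and "letter w p1 < letter w p0" "letter w p2 < letter w p0"
    and "letter w p0 < letter w p3" "letter w p0 < letter w p4"
  shows False
proof -
  have "letter w p1 \<noteq> letter w p2" "letter w p3 \<noteq> letter w p4"
    using letter_inj[OF assms(1), of p1 p2] letter_inj[OF assms(1), of p3 p4] pos by auto
  with assms(12-15) obtain P :: "nat list" where P: "P \<in> {[3,1,2,4,5], [3,2,1,4,5], [3,1,2,5,4], [3,2,1,5,4]}"
    and iso: "\<forall>a<5. \<forall>b<5. [letter w p0, letter w p1, letter w p2, letter w p3, letter w p4] ! a <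
      [letter w p0, letter w p1, letter w p2, letter w p3, letter w p4] ! b \<longleftrightarrow> P ! a < P ! b"
    by (rule two_below_two_above_order_type)
  define ps where "ps = [p0 - 1, p1 - 1, p2 - 1, p3 - 1, p4 - 1]"
  have "map (nth w) ps = [letter w p0, letter w p1, letter w p2, letter w p3, letter w p4]"
    unfolding ps_def letter_def by simp
  with P iso pos have "contains_pattern w P"
    by (intro contains_patternI[of ps]) (auto simp: ps_def)
  with P assms(2-5) show False unfolding avoids_def by auto
qed

lemma downward_closed_threshold:
  fixes H :: "nat \<Rightarrow> bool"
  assumes "\<And>j j'. m < j \<Longrightarrow> j < j' \<Longrightarrow> j' < c \<Longrightarrow> H j' \<Longrightarrow> H j"
  shows "(\<forall>j. m < j \<and> j < c \<longrightarrow> \<not> H j) \<or>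
    (\<exists>k. m < k \<and> k < c \<and> (\<forall>j. m < j \<and> j \<le> k \<longrightarrow> H j) \<and> (\<forall>j. k < j \<and> j < c \<longrightarrow> \<not> H j))"
proof (cases "\<exists>j. m < j \<and> j < c \<and> H j")
  case True
  then obtain j0 where j0: "m < j0" "j0 < c" "H j0" by blast
  define k where "k = Max {j. m < j \<and> j < c \<and> H j}"
  have fin: "finite {j. m < j \<and> j < c \<and> H j}" by (rule finite_subset[of _ "{..<c}"]) auto
  then have k: "m < k" "k < c" "H k"
    using Max_in[OF fin] j0 unfolding k_def by blast+
  have "\<not> H j" if "k < j" "j < c" for j
  proof
    assume "H j"
    with that k have "j \<le> k" unfolding k_def using Max_ge[OF fin, of j] by simp
    with that show False by simp
  qed
  with k assms[of _ k] show ?thesis by (metis le_less)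
qed auto

lemma avoider_shape_after_max:
  assumes "distinct w"
    and avoids: "avoids w [3,1,2,4,5]" "avoids w [3,2,1,4,5]" "avoids w [3,1,2,5,4]" "avoids w [3,2,1,5,4]"
    and pos: "1 \<le> a" "a < m" "m < c" "c \<le> length w"
    and below_a: "\<forall>j. a < j \<and> j < m \<longrightarrow> letter w j < letter w a"
    and below_c: "\<forall>j. m < j \<and> j < c \<longrightarrow> letter w j < letter w c"
    and "letter w a < letter w c" "letter w c < letter w m"
  shows "m = a + 1 \<or>
    m = a + 2 \<and> ((\<forall>j. m < j \<and> j < c \<longrightarrow> letter w j < letter w a) \<or>
      (\<exists>k. m < k \<and> k < c \<and> (\<forall>j. m < j \<and> j \<le> k \<longrightarrow> letter w a < letter w j) \<and>
        (\<forall>j. k < j \<and> j < c \<longrightarrow> letter w j < letter w a)))"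
proof -
  note no_pattern = no_two_below_then_two_above[OF assms(1-5)]
  have "m \<le> a + 2"
  proof (rule ccontr)
    assume "\<not> m \<le> a + 2"
    with assms(6-13) show False
      using no_pattern[of a "a + 1" "a + 2" m c] by auto
  qed
  with pos consider "m = a + 1" | "m = a + 2" by linarith
  then show ?thesis
  proof cases
    case m: 2
    have low: "letter w j < letter w a \<longleftrightarrow> \<not> letter w a < letter w j" if "m < j" "j < c" for j
      using letter_inj[OF assms(1), of j a] that pos by (auto simp: not_less_iff_gr_or_eq)
    have "letter w a < letter w j" if "m < j" "j < j'" "j' < c" "letter w a < letter w j'" for j j'
    proof (rule ccontr)
      assume "\<not> letter w a < letter w j"
      with that pos m below_a below_c assms(12) show False
        using no_pattern[of a "a + 1" j j' c] low[of j] by auto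
    qed
    then show ?thesis
      using downward_closed_threshold[of m c "\<lambda>j. letter w a < letter w j"] low m by auto
  qed simp
qed

lemma avoider_trichotomy_after_max:
  assumes "distinct w"
    and "avoids w [3,1,2,4,5]" "avoids w [3,2,1,4,5]" "avoids w [3,1,2,5,4]" "avoids w [3,2,1,5,4]"
    and "1 \<le> a" "a < m" "m < c" "c \<le> length w"
    and "\<forall>j. a < j \<and> j < m \<longrightarrow> letter w j < letter w a"
    and "\<forall>j. m < j \<and> j < c \<longrightarrow> letter w j < letter w c"
    and "letter w a < letter w c" "letter w c < letter w m"
  shows
    "let I1 = (m = a + 1);
         I2 = (m = a + 2 \<and> (\<forall>j. m < j \<and> j < c \<longrightarrow> letter w j < letter w a));
         I3 = (m = a + 2 \<and>
               (\<exists>k::nat. m < k \<and> k < c \<and>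
                  (\<forall>j. m < j \<and> j \<le> k \<longrightarrow> letter w j > letter w a) \<and>
                  (\<forall>j. k < j \<and> j < c \<longrightarrow> letter w j < letter w a)))
     in (I1 \<and> \<not> I2 \<and> \<not> I3) \<or> (\<not> I1 \<and> I2 \<and> \<not> I3) \<or> (\<not> I1 \<and> \<not> I2 \<and> I3)"
proof -
  have excl: "\<not> ((\<forall>j. m < j \<and> j < c \<longrightarrow> letter w j < letter w a) \<and>
      (\<exists>k. m < k \<and> k < c \<and> (\<forall>j. m < j \<and> j \<le> k \<longrightarrow> letter w a < letter w j)))"
    by (meson le_refl less_asym)
  from avoider_shape_after_max[OF assms] excl show ?thesis
    unfolding Let_def by (elim disjE) auto
qed

theorem lemma3p1:
  fixes w :: "nat list"
  defines "n \<equiv> length w"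
    and "s \<equiv> length (ltr_max_pos w)"
    and "t \<equiv> length (rtl_max_pos w)"
    and "l \<equiv> \<lambda>k. ltr_max_pos w ! (k - 1)"
    and "r \<equiv> \<lambda>k. rtl_max_pos w ! (k - 1)"
  assumes dist: "distinct w"
    and pos: "\<forall>x \<in> set w. 0 < x"
    and av1: "avoids w [3,1,2,4,5]"
    and av2: "avoids w [3,2,1,4,5]"
    and av3: "avoids w [3,1,2,5,4]"
    and av4: "avoids w [3,2,1,5,4]"
    and s1: "s > 1" and t1: "t > 1"
    and ls: "l s > s"
    and cmp: "letter w (l (s - 1)) < letter w (r 2)"
  shows
    "let I1 = (l s = l (s - 1) + 1);
         I2 = (l s = l (s - 1) + 2 \<and>
               (\<forall>j. l s < j \<and> j < r 2 \<longrightarrow> letter w j < letter w (l (s - 1))));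
         I3 = (l s = l (s - 1) + 2 \<and>
               (\<exists>k::nat. l s < k \<and> k < r 2 \<and>
                  (\<forall>j. l s < j \<and> j \<le> k \<longrightarrow> letter w j > letter w (l (s - 1))) \<and>
                  (\<forall>j. k < j \<and> j < r 2 \<longrightarrow> letter w j < letter w (l (s - 1)))))
     in (I1 \<and> \<not> I2 \<and> \<not> I3) \<or> (\<not> I1 \<and> I2 \<and> \<not> I3) \<or> (\<not> I1 \<and> \<not> I2 \<and> I3)"
proof -
  let ?L = "ltr_max_pos w" and ?R = "rtl_max_pos w"
  have len: "1 < length ?L" "1 < length ?R" using s1 t1 unfolding s_def t_def .
  have pos_eqs: "l (s - 1) = ?L ! (length ?L - 2)" "l s = ?L ! (length ?L - 1)" "r 2 = ?R ! 1"
    unfolding l_def r_def s_def by (simp_all add: numeral_2_eq_2)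
  note around = ltr_rtl_max_pos_around_max[OF dist len]
  have "letter w (?L ! (length ?L - 2)) < letter w (?R ! 1)" using cmp unfolding pos_eqs .
  from avoider_trichotomy_after_max[OF dist av1 av2 av3 av4 around(1-6) this around(7)]
  show ?thesis unfolding pos_eqs .
qed

end
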